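(* Let $0<b<c$, $a>0$, and let $(x_1,y_1),\ldots,(x_T,y_T)\in\mathbb{R}^d\times\{-1,+1\}$ be an arbitrary sequence of examples. Run the LASEC-SS algorithm (described in the context) with parameters $a,b,c$ on this sequence. Then for every sequence $u_1,\ldots,u_T\in\mathbb{R}^d$ and every $\gamma>0$, $$\mathbb{E}\Big[\sum_{t=1}^TM_t\Big]\le\frac{1}{\gamma}\bar L_{\gamma,T}(\{u_t\})+\frac{a}{2\gamma^2}\Big(b\|u_1\|^2+cV_m+\mathbb{E}\Big[\sum_{t=1}^TM_tZ_t(u_t^\top x_t)^2\Big]\Big)+\frac{1}{2a}\mathbb{E}\Big[\sum_{t=1}^TM_tZ_tx_t^\top D_t^{-1}x_t\Big].$$ Moreover, the expected number of labels queried equals $\sum_{t=1}^T\mathbb{E}\big[\frac{a}{a+|\hat p_t|}\big]$.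
   Context: LASEC-SS algorithm with parameters $0<b<c$, $a>0$. Initialize $D_0=\frac{bc}{c-b}I\in\mathbb{R}^{d\times d}$, $e_0=0\in\mathbb{R}^d$, $k=1$. For $t=1,\ldots,T$: receive $x_t$; set $S_t=(D_{k-1}^{-1}+c^{-1}I)^{-1}+x_tx_t^\top$ and $\hat p_t=x_t^\top S_t^{-1}(I+c^{-1}D_{k-1})^{-1}e_{k-1}$; predict $\hat y_t=\mathrm{sign}(\hat p_t)$; draw a Bernoulli random variable $Z_t\in\{0,1\}$ with parameter $a/(a+|\hat p_t|)$; if $Z_t=1$, query the label $y_t$ and, if $\hat y_t\ne y_t$, set $e_k=(I+c^{-1}D_{k-1})^{-1}e_{k-1}+y_tx_t$, $D_k=S_t$, $k\leftarrow k+1$. Let $M_t$ be the indicator of $\hat y_t\ne y_t$ (mistakes count on all rounds, queried or not). In the last term, $D_t$ denotes the matrix $S_t$ computed at round $t$ (on rounds with $M_tZ_t=1$ this is the matrix stored by the update). Let $t_1<\cdots<t_m$ be the rounds with $M_tZ_t=1$ (update rounds) and $V_m=\sum_{k=2}^m\|u_{t_k}-u_{t_{k-1}}\|^2$. Hinge loss $\ell_{\gamma,t}(u)=\max\{0,\gamma-y_tu^\top x_t\}$ and $\bar L_{\gamma,T}(\{u_t\})=\mathbb{E}\big[\sum_{t=1}^TM_tZ_t\ell_{\gamma,t}(u_t)\big]$. *)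

theory Defs
  imports "HOL-Analysis.Analysis"
begin

text \<open>Rounds are numbered 1..T.
  The random coins are encoded by z :: nat \<Rightarrow> bool (z t = True iff Z_t = 1).\<close>

definition outer :: "real^'d \<Rightarrow> real^'d^'d" where
  "outer v = (\<chi> i j. v$i * v$j)"

definition lasec_S :: "real \<Rightarrow> real^'d^'d \<Rightarrow> real^'d \<Rightarrow> real^'d^'d" where
  "lasec_S c D v = matrix_inv (matrix_inv D + (1/c) *\<^sub>R mat 1) + outer v"

definition lasec_p :: "real \<Rightarrow> real^'d^'d \<Rightarrow> real^'d \<Rightarrow> real^'d \<Rightarrow> real" where
  "lasec_p c D e v = v \<bullet> (matrix_inv (lasec_S c D v) *v (matrix_inv (mat 1 + (1/c) *\<^sub>R D) *v e))"

text \<open>State (D_{k-1}, e_{k-1}) after rounds 1..t.\<close>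
fun lasec_state :: "real \<Rightarrow> real \<Rightarrow> (nat \<Rightarrow> real^'d) \<Rightarrow> (nat \<Rightarrow> real) \<Rightarrow> (nat \<Rightarrow> bool)
    \<Rightarrow> nat \<Rightarrow> (real^'d^'d) \<times> (real^'d)" where
  "lasec_state b c x y z 0 = ((b * c / (c - b)) *\<^sub>R mat 1, 0)"
| "lasec_state b c x y z (Suc t) =
     (let (D, e) = lasec_state b c x y z t;
          p = lasec_p c D e (x (Suc t))
      in if z (Suc t) \<and> sgn p \<noteq> y (Suc t)
         then (lasec_S c D (x (Suc t)),
               matrix_inv (mat 1 + (1/c) *\<^sub>R D) *v e + y (Suc t) *\<^sub>R x (Suc t))
         else (D, e))"

text \<open>Matrix S_t (= D_t in the bound) and margin \<hat>p_t computed at round t (t \<ge> 1).\<close>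
definition lasec_Smat :: "real \<Rightarrow> real \<Rightarrow> (nat \<Rightarrow> real^'d) \<Rightarrow> (nat \<Rightarrow> real) \<Rightarrow> (nat \<Rightarrow> bool)
    \<Rightarrow> nat \<Rightarrow> real^'d^'d" where
  "lasec_Smat b c x y z t = lasec_S c (fst (lasec_state b c x y z (t - 1))) (x t)"

definition lasec_phat :: "real \<Rightarrow> real \<Rightarrow> (nat \<Rightarrow> real^'d) \<Rightarrow> (nat \<Rightarrow> real) \<Rightarrow> (nat \<Rightarrow> bool)
    \<Rightarrow> nat \<Rightarrow> real" where
  "lasec_phat b c x y z t =
     (case lasec_state b c x y z (t - 1) of (D, e) \<Rightarrow> lasec_p c D e (x t))"

definition lasec_M :: "real \<Rightarrow> real \<Rightarrow> (nat \<Rightarrow> real^'d) \<Rightarrow> (nat \<Rightarrow> real) \<Rightarrow> (nat \<Rightarrow> bool)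
    \<Rightarrow> nat \<Rightarrow> bool" where
  "lasec_M b c x y z t = (sgn (lasec_phat b c x y z t) \<noteq> y t)"

text \<open>Law of (Z_1,...,Z_T): product of the conditional Bernoulli probabilities
  P(Z_t = 1 | Z_1..Z_{t-1}) = a/(a+|\<hat>p_t|).\<close>
definition lasec_prob :: "real \<Rightarrow> real \<Rightarrow> real \<Rightarrow> (nat \<Rightarrow> real^'d) \<Rightarrow> (nat \<Rightarrow> real) \<Rightarrow> nat
    \<Rightarrow> (nat \<Rightarrow> bool) \<Rightarrow> real" where
  "lasec_prob a b c x y T z =
     (\<Prod>t\<in>{1..T}. (let q = a / (a + \<bar>lasec_phat b c x y z t\<bar>) in if z t then q else 1 - q))"

definition lasec_E :: "real \<Rightarrow> real \<Rightarrow> real \<Rightarrow> (nat \<Rightarrow> real^'d) \<Rightarrow> (nat \<Rightarrow> real) \<Rightarrow> nat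
    \<Rightarrow> ((nat \<Rightarrow> bool) \<Rightarrow> real) \<Rightarrow> real" where
  "lasec_E a b c x y T F =
     (\<Sum>z\<in>PiE {1..T} (\<lambda>_. UNIV). lasec_prob a b c x y T z * F z)"

definition hinge :: "real \<Rightarrow> real \<Rightarrow> real^'d \<Rightarrow> real^'d \<Rightarrow> real" where
  "hinge \<gamma> yt w xt = max 0 (\<gamma> - yt * (w \<bullet> xt))"

definition lasec_upd :: "real \<Rightarrow> real \<Rightarrow> (nat \<Rightarrow> real^'d) \<Rightarrow> (nat \<Rightarrow> real) \<Rightarrow> nat
    \<Rightarrow> (nat \<Rightarrow> bool) \<Rightarrow> nat set" where
  "lasec_upd b c x y T z = {t \<in> {1..T}. lasec_M b c x y z t \<and> z t}"

definition lasec_V :: "real \<Rightarrow> real \<Rightarrow> (nat \<Rightarrow> real^'d) \<Rightarrow> (nat \<Rightarrow> real) \<Rightarrow> nat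
    \<Rightarrow> (nat \<Rightarrow> real^'d) \<Rightarrow> (nat \<Rightarrow> bool) \<Rightarrow> real" where
  "lasec_V b c x y T u z =
     (let U = lasec_upd b c x y T z in
      \<Sum>t\<in>U. if {s \<in> U. s < t} = {} then 0
             else (norm (u t - u (Max {s \<in> U. s < t})))\<^sup>2)"

end

theory Submission
  imports Defs
begin

text \<open>For a state \<open>(D, e)\<close> with weight \<open>\<theta> = D\<inverse> e\<close> take the potential
  \<open>\<Phi>(v) = (v - \<theta>)\<^sup>T D (v - \<theta>) / 2\<close>. At an update round, shrinking \<open>D\<close> to \<open>(D\<inverse> + c\<inverse> I)\<inverse>\<close>
  costs at most \<open>c \<parallel>v - v'\<parallel>\<^sup>2 / 2\<close> when the comparator drifts from \<open>v'\<close> to \<open>v\<close>, because that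
  quadratic form is the infimal convolution of those of \<open>D\<close> and \<open>c I\<close>; the rank-one step then
  costs at most \<open>(v\<^sup>T x)\<^sup>2 / 2 - y v\<^sup>T x + y p + x\<^sup>T S\<inverse> x / 2\<close>. Telescoping against \<open>\<Phi> \<ge> 0\<close> with
  \<open>v = (a/\<gamma>) u\<^sub>t\<close>, and using \<open>y p = -\<bar>p\<bar>\<close> on mistakes, bounds \<open>\<Sum> M\<^sub>t Z\<^sub>t (a + \<bar>p\<^sub>t\<bar>)\<close> pathwise.
  Finally \<open>Z\<^sub>t\<close> is a coin of probability \<open>a/(a + \<bar>p\<^sub>t\<bar>)\<close> given the past, on which \<open>M\<^sub>t\<close> and \<open>p\<^sub>t\<close>
  depend only, so \<open>E[M\<^sub>t] = E[M\<^sub>t Z\<^sub>t (a + \<bar>p\<^sub>t\<bar>)/a]\<close>.\<close>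

section \<open>Positive definite matrices\<close>

definition pos_def :: "real^'n^'n \<Rightarrow> bool" where
  "pos_def A \<longleftrightarrow> transpose A = A \<and> (\<forall>v. v \<noteq> 0 \<longrightarrow> 0 < v \<bullet> (A *v v))"

definition pos_semidef :: "real^'n^'n \<Rightarrow> bool" where
  "pos_semidef A \<longleftrightarrow> transpose A = A \<and> (\<forall>v. 0 \<le> v \<bullet> (A *v v))"

lemma pos_def_imp_pos_semidef: "pos_def A \<Longrightarrow> pos_semidef A"
  unfolding pos_def_def pos_semidef_def
  by (metis inner_zero_left order_less_imp_le order_refl)

lemma symmetric_inner_matrix_left:
  "transpose A = A \<Longrightarrow> x \<bullet> (A *v y) = (A *v x) \<bullet> (y::real^'n)"
  by (metis dot_lmul_matrix transpose_matrix_vector)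

lemma symmetric_inner_matrix_commute:
  "transpose A = A \<Longrightarrow> x \<bullet> (A *v y) = y \<bullet> (A *v (x::real^'n))"
  by (metis symmetric_inner_matrix_left inner_commute)

lemma matrix_inv_unique:
  fixes A B :: "real^'n^'n"
  assumes "A ** B = mat 1"
  shows "matrix_inv A = B"
proof -
  have "A ** B = mat 1 \<and> B ** A = mat 1" using assms matrix_left_right_inverse by blast
  then have "A ** matrix_inv A = mat 1 \<and> matrix_inv A ** A = mat 1"
    unfolding matrix_inv_def by (rule someI)
  then show ?thesis
    by (metis assms matrix_mul_assoc matrix_mul_lid matrix_mul_rid)
qed

lemma matrix_inv_scaleR_id:
  "k \<noteq> 0 \<Longrightarrow> matrix_inv (k *\<^sub>R mat 1 :: real^'n^'n) = (1/k) *\<^sub>R mat 1"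
  by (rule matrix_inv_unique) (simp add: matrix_scalar_ac)

lemma pos_def_matrix_inv_mult:
  assumes "pos_def A"
  shows "A ** matrix_inv A = mat 1 \<and> matrix_inv A ** A = mat 1"
proof -
  have "\<forall>x. A *v x = 0 \<longrightarrow> x = 0"
    using assms unfolding pos_def_def by (metis inner_zero_right less_irrefl)
  then have "invertible A"
    using invertible_left_inverse matrix_left_invertible_ker by blast
  then show ?thesis unfolding invertible_def matrix_inv_def by (rule someI_ex)
qed

lemma pos_def_mult_matrix_inv_vector: "pos_def A \<Longrightarrow> A *v (matrix_inv A *v w) = w"
  by (simp add: matrix_vector_mul_assoc pos_def_matrix_inv_mult)

lemma pos_def_matrix_inv_mult_vector: "pos_def A \<Longrightarrow> matrix_inv A *v (A *v w) = w"
  by (simp add: matrix_vector_mul_assoc pos_def_matrix_inv_mult)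

lemma pos_def_matrix_inv:
  assumes A: "pos_def A"
  shows "pos_def (matrix_inv A)"
proof -
  have inv: "A ** matrix_inv A = mat 1" using pos_def_matrix_inv_mult[OF A] by simp
  have "transpose A = A" using A pos_def_def by blast
  then have "transpose (matrix_inv A) ** A = mat 1"
    using arg_cong[OF inv, of transpose] by (simp add: matrix_transpose_mul)
  then have "transpose (matrix_inv A) = matrix_inv A"
    by (metis inv matrix_mul_assoc matrix_mul_lid matrix_mul_rid)
  moreover have "0 < v \<bullet> (matrix_inv A *v v)" if "v \<noteq> 0" for v
  proof -
    define w where "w = matrix_inv A *v v"
    have v: "v = A *v w" unfolding w_def using pos_def_mult_matrix_inv_vector[OF A] by simp
    then have "w \<noteq> 0" using that by auto
    then have "0 < w \<bullet> (A *v w)" using A pos_def_def by blast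
    then show ?thesis unfolding w_def[symmetric] by (subst v) (simp add: inner_commute)
  qed
  ultimately show ?thesis unfolding pos_def_def by blast
qed

lemma pos_def_add_pos_semidef: "pos_def A \<Longrightarrow> pos_semidef B \<Longrightarrow> pos_def (A + B)"
  unfolding pos_def_def pos_semidef_def
  by (auto simp: matrix_vector_mult_add_rdistrib inner_add_right transpose_def vec_eq_iff add_pos_nonneg)

lemma pos_semidef_scaleR_id: "0 \<le> k \<Longrightarrow> pos_semidef (k *\<^sub>R mat 1 :: real^'n^'n)"
  unfolding pos_semidef_def
  by (auto simp: scaleR_matrix_vector_assoc[symmetric] transpose_def vec_eq_iff mat_def[symmetric])
     (simp add: mat_def)

lemma pos_def_scaleR_id: "0 < k \<Longrightarrow> pos_def (k *\<^sub>R mat 1 :: real^'n^'n)"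
  unfolding pos_def_def
  by (auto simp: scaleR_matrix_vector_assoc[symmetric] transpose_def vec_eq_iff mat_def[symmetric])
     (simp add: mat_def)

lemma pos_def_scaleR: "0 < k \<Longrightarrow> pos_def A \<Longrightarrow> pos_def (k *\<^sub>R A)"
  unfolding pos_def_def
  by (auto simp: scaleR_matrix_vector_assoc[symmetric] transpose_def vec_eq_iff)

lemma pos_def_id_plus_scaleR: "pos_def A \<Longrightarrow> 0 < k \<Longrightarrow> pos_def (mat 1 + k *\<^sub>R A)"
  by (metis add.commute pos_def_add_pos_semidef pos_def_scaleR pos_semidef_scaleR_id scaleR_one zero_le_one)

lemma outer_mult_vector: "outer v *v w = (v \<bullet> w) *\<^sub>R v"
  by (simp add: outer_def matrix_vector_mult_def vec_eq_iff inner_vec_def sum_distrib_left mult_ac)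

lemma inner_outer_mult: "w \<bullet> (outer v *v w) = (v \<bullet> w)\<^sup>2"
  by (simp add: outer_mult_vector power2_eq_square inner_commute)

lemma pos_semidef_outer: "pos_semidef (outer v)"
  unfolding pos_semidef_def
  by (auto simp: inner_outer_mult) (auto simp: outer_def transpose_def vec_eq_iff mult.commute)

definition shrink :: "real \<Rightarrow> real^'n^'n \<Rightarrow> real^'n^'n" where
  "shrink c D = matrix_inv (matrix_inv D + (1/c) *\<^sub>R mat 1)"

lemma lasec_S_eq_shrink: "lasec_S c D v = shrink c D + outer v"
  unfolding lasec_S_def shrink_def ..

lemma pos_def_matrix_inv_add_scaleR_id:
  "pos_def D \<Longrightarrow> 0 \<le> k \<Longrightarrow> pos_def (matrix_inv D + k *\<^sub>R mat 1)"
  by (intro pos_def_add_pos_semidef pos_def_matrix_inv pos_semidef_scaleR_id)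

lemma pos_def_shrink: "pos_def D \<Longrightarrow> 0 < c \<Longrightarrow> pos_def (shrink c D)"
  unfolding shrink_def by (intro pos_def_matrix_inv pos_def_matrix_inv_add_scaleR_id) simp_all

lemma pos_def_lasec_S: "pos_def D \<Longrightarrow> 0 < c \<Longrightarrow> pos_def (lasec_S c D v)"
  unfolding lasec_S_eq_shrink by (intro pos_def_add_pos_semidef pos_def_shrink pos_semidef_outer)

lemma shrink_initial:
  assumes "0 < b" "b < c"
  shows "shrink c ((b * c / (c - b)) *\<^sub>R mat 1 :: real^'n^'n) = b *\<^sub>R mat 1"
proof -
  define k where "k = b * c / (c - b)"
  have k: "k \<noteq> 0" and "1 / k + 1 / c = 1 / b"
    using assms unfolding k_def by (simp_all add: field_simps)
  then have "matrix_inv (k *\<^sub>R mat 1) + (1/c) *\<^sub>R mat 1 = (1/b) *\<^sub>R (mat 1 :: real^'n^'n)"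
    by (metis matrix_inv_scaleR_id scaleR_add_left)
  then show ?thesis
    using assms unfolding shrink_def k_def[symmetric] by (simp add: matrix_inv_scaleR_id)
qed

section \<open>The potential of a state\<close>

definition potential :: "real^'n^'n \<Rightarrow> real^'n \<Rightarrow> real^'n \<Rightarrow> real" where
  "potential A e v = (1/2) * ((v - matrix_inv A *v e) \<bullet> (A *v (v - matrix_inv A *v e)))"

definition update_cost :: "real^'n^'n \<Rightarrow> real^'n \<Rightarrow> real \<Rightarrow> real \<Rightarrow> real^'n \<Rightarrow> real" where
  "update_cost S x y p v = (1/2) * (v \<bullet> x)\<^sup>2 - y * (v \<bullet> x) + y * p + (1/2) * (x \<bullet> (matrix_inv S *v x))"

lemma potential_nonneg: "pos_def A \<Longrightarrow> 0 \<le> potential A e v"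
  using pos_def_imp_pos_semidef unfolding potential_def pos_semidef_def by auto

lemma shrink_mult_weight:
  assumes D: "pos_def D" and c: "0 < c"
  shows "shrink c D *v (matrix_inv D *v e) = matrix_inv (mat 1 + (1/c) *\<^sub>R D) *v e"
proof -
  define f where "f = matrix_inv (mat 1 + (1/c) *\<^sub>R D) *v e"
  have "pos_def (mat 1 + (1/c) *\<^sub>R D)" using D c by (intro pos_def_id_plus_scaleR) simp_all
  then have "(mat 1 + (1/c) *\<^sub>R D) *v f = e"
    unfolding f_def by (rule pos_def_mult_matrix_inv_vector)
  then have "e = f + (1/c) *\<^sub>R (D *v f)"
    by (simp add: matrix_vector_mult_add_rdistrib scaleR_matrix_vector_assoc)
  then have "matrix_inv D *v e = (matrix_inv D + (1/c) *\<^sub>R mat 1) *v f"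
    by (simp add: matrix_vector_right_distrib matrix_vector_mult_add_rdistrib matrix_vector_mult_scaleR
        pos_def_matrix_inv_mult_vector[OF D] flip: scaleR_matrix_vector_assoc)
  moreover have "pos_def (matrix_inv D + (1/c) *\<^sub>R mat 1)"
    using D c by (intro pos_def_matrix_inv_add_scaleR_id) simp_all
  ultimately show ?thesis
    unfolding shrink_def f_def[symmetric] by (simp add: pos_def_matrix_inv_mult_vector)
qed

text \<open>Complete the square at \<open>z = (A + x x\<^sup>T)\<inverse> f\<close> around \<open>A\<inverse> f\<close>.\<close>
lemma inner_matrix_inv_add_outer_le:
  fixes A :: "real^'n^'n"
  assumes A: "pos_def A"
  shows "f \<bullet> (matrix_inv (A + outer x) *v f) \<le> f \<bullet> (matrix_inv A *v f)"
proof -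
  have S: "pos_def (A + outer x)" using A by (intro pos_def_add_pos_semidef pos_semidef_outer)
  have sA: "transpose A = A" using A pos_def_def by blast
  define z where "z = matrix_inv (A + outer x) *v f"
  define \<theta> where "\<theta> = matrix_inv A *v f"
  have A\<theta>: "A *v \<theta> = f" unfolding \<theta>_def using pos_def_mult_matrix_inv_vector[OF A] .
  have "(A + outer x) *v z = f" unfolding z_def using pos_def_mult_matrix_inv_vector[OF S] .
  then have zf: "z \<bullet> f = z \<bullet> (A *v z) + (x \<bullet> z)\<^sup>2"
    by (auto simp: matrix_vector_mult_add_rdistrib inner_add_right inner_outer_mult)
  have "0 \<le> (z - \<theta>) \<bullet> (A *v (z - \<theta>))" using A pos_def_imp_pos_semidef pos_semidef_def by blast
  also have "\<dots> = z \<bullet> (A *v z) - 2 * (z \<bullet> f) + \<theta> \<bullet> f"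
    using symmetric_inner_matrix_commute[OF sA, of \<theta> z] A\<theta>
    by (simp add: matrix_vector_mult_diff_distrib inner_diff_left inner_diff_right)
  finally show ?thesis
    using zf zero_le_power2[of "x \<bullet> z"] inner_commute[of f z] inner_commute[of f \<theta>]
    unfolding z_def[symmetric] \<theta>_def[symmetric] by linarith
qed

lemma potential_update_le_shrink:
  fixes D :: "real^'n^'n" and e x v :: "real^'n"
  assumes D: "pos_def D" and c: "0 < c" and y: "y = -1 \<or> y = 1"
  defines "\<theta> \<equiv> matrix_inv D *v e"
  shows "potential (lasec_S c D x) (matrix_inv (mat 1 + (1/c) *\<^sub>R D) *v e + y *\<^sub>R x) v
    \<le> (1/2) * ((v - \<theta>) \<bullet> (shrink c D *v (v - \<theta>)))
      + update_cost (lasec_S c D x) x y (lasec_p c D e x) v"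
proof -
  define Dt where "Dt = shrink c D"
  define f where "f = matrix_inv (mat 1 + (1/c) *\<^sub>R D) *v e"
  define S where "S = lasec_S c D x"
  define Si where "Si = matrix_inv S"
  define e' where "e' = f + y *\<^sub>R x"
  have pDt: "pos_def Dt" unfolding Dt_def using D c by (rule pos_def_shrink)
  have pS: "pos_def S" unfolding S_def using D c by (rule pos_def_lasec_S)
  have S_eq: "S = Dt + outer x" unfolding S_def Dt_def by (rule lasec_S_eq_shrink)
  have sS: "transpose S = S" and sSi: "transpose Si = Si" and sDt: "transpose Dt = Dt"
    using pS pos_def_matrix_inv[OF pS] pDt unfolding pos_def_def Si_def by auto
  have Dt_\<theta>: "Dt *v \<theta> = f" unfolding Dt_def \<theta>_def f_def using D c by (rule shrink_mult_weight)
  have "f \<bullet> (Si *v f) \<le> f \<bullet> (matrix_inv Dt *v f)"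
    unfolding Si_def S_eq by (rule inner_matrix_inv_add_outer_le[OF pDt])
  moreover have "matrix_inv Dt *v f = \<theta>"
    using Dt_\<theta> pos_def_matrix_inv_mult_vector[OF pDt] by metis
  ultimately have fSf: "f \<bullet> (Si *v f) \<le> \<theta> \<bullet> (Dt *v \<theta>)" using Dt_\<theta> by (simp add: inner_commute)
  have potential_eq: "potential S e' v = (1/2) * (v \<bullet> (S *v v) - 2 * (v \<bullet> e') + e' \<bullet> (Si *v e'))"
  proof -
    have Se': "S *v (Si *v e') = e'" unfolding Si_def using pos_def_mult_matrix_inv_vector[OF pS] .
    then have "(Si *v e') \<bullet> (S *v v) = e' \<bullet> v"
      using symmetric_inner_matrix_left[OF sS, of "Si *v e'" v] by simp
    with Se' show ?thesis unfolding potential_def Si_def[symmetric]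
      by (simp add: matrix_vector_mult_diff_distrib inner_diff_left inner_diff_right inner_commute)
  qed
  have "y * y = 1" using y by auto
  then have e'Se': "e' \<bullet> (Si *v e') = f \<bullet> (Si *v f) + 2 * (y * (x \<bullet> (Si *v f))) + x \<bullet> (Si *v x)"
    unfolding e'_def using symmetric_inner_matrix_commute[OF sSi, of f x]
    by (simp add: algebra_simps)
  have vSv: "v \<bullet> (S *v v) = v \<bullet> (Dt *v v) + (v \<bullet> x)\<^sup>2"
    unfolding S_eq
    by (simp add: matrix_vector_mult_add_rdistrib inner_add_right inner_outer_mult inner_commute)
  have ve': "v \<bullet> e' = v \<bullet> f + y * (v \<bullet> x)" unfolding e'_def by (simp add: inner_add_right)
  have v\<theta>: "(v - \<theta>) \<bullet> (Dt *v (v - \<theta>)) = v \<bullet> (Dt *v v) - 2 * (v \<bullet> f) + \<theta> \<bullet> (Dt *v \<theta>)"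
    using symmetric_inner_matrix_commute[OF sDt, of \<theta> v] Dt_\<theta>
    by (simp add: matrix_vector_mult_diff_distrib inner_diff_left inner_diff_right)
  have "lasec_p c D e x = x \<bullet> (Si *v f)" unfolding lasec_p_def Si_def S_def f_def ..
  then show ?thesis
    unfolding S_def[symmetric] f_def[symmetric] e'_def[symmetric] Dt_def[symmetric]
      potential_eq update_cost_def Si_def[symmetric]
    using fSf e'Se' vSv ve' v\<theta> by (simp add: right_diff_distrib distrib_left)
qed

text \<open>The quadratic form of \<open>shrink c D = (D\<inverse> + c\<inverse> I)\<inverse>\<close> is the infimal convolution
  of those of \<open>D\<close> and \<open>c I\<close>; only the easy inequality is needed.\<close>
lemma shrink_quad_le:
  fixes D :: "real^'n^'n"
  assumes D: "pos_def D" and c: "0 < c"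
  shows "w \<bullet> (shrink c D *v w) \<le> u \<bullet> (D *v u) + c * (norm (w - u))\<^sup>2"
proof -
  define M where "M = matrix_inv D + (1/c) *\<^sub>R mat 1"
  have pM: "pos_def M" unfolding M_def using D c by (intro pos_def_matrix_inv_add_scaleR_id) simp_all
  have sD: "transpose D = D" using D pos_def_def by blast
  define g where "g = shrink c D *v w"
  have w_eq: "w = matrix_inv D *v g + (1/c) *\<^sub>R g"
    using pos_def_mult_matrix_inv_vector[OF pM, of w] unfolding g_def shrink_def M_def
    by (simp add: matrix_vector_mult_add_rdistrib flip: scaleR_matrix_vector_assoc)
  define \<delta> where "\<delta> = u - matrix_inv D *v g"
  have u_eq: "u = matrix_inv D *v g + \<delta>" unfolding \<delta>_def by simp
  have DDi: "D *v (matrix_inv D *v g) = g" using pos_def_mult_matrix_inv_vector[OF D] .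
  have quad_w: "w \<bullet> (shrink c D *v w) = g \<bullet> (matrix_inv D *v g) + (1/c) * (g \<bullet> g)"
    unfolding g_def[symmetric] by (subst w_eq) (simp add: inner_add_left inner_add_right inner_commute)
  have quad_u: "u \<bullet> (D *v u) = g \<bullet> (matrix_inv D *v g) + 2 * (g \<bullet> \<delta>) + \<delta> \<bullet> (D *v \<delta>)"
    using symmetric_inner_matrix_left[OF sD, of "matrix_inv D *v g" \<delta>] DDi
    by (simp add: u_eq matrix_vector_right_distrib inner_add_left inner_add_right inner_commute)
  have "w - u = (1/c) *\<^sub>R g - \<delta>" using w_eq u_eq by simp
  then have "c * (norm (w - u))\<^sup>2 = c * (((1/c) *\<^sub>R g - \<delta>) \<bullet> ((1/c) *\<^sub>R g - \<delta>))"
    by (simp add: power2_norm_eq_inner)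
  also have "\<dots> = (1/c) * (g \<bullet> g) - 2 * (g \<bullet> \<delta>) + c * (\<delta> \<bullet> \<delta>)"
    using c by (simp add: inner_diff_left inner_diff_right inner_commute field_simps)
  finally have dist: "c * (norm (w - u))\<^sup>2 = (1/c) * (g \<bullet> g) - 2 * (g \<bullet> \<delta>) + c * (\<delta> \<bullet> \<delta>)" .
  have "0 \<le> \<delta> \<bullet> (D *v \<delta>)" using D pos_def_imp_pos_semidef pos_semidef_def by blast
  moreover have "0 \<le> c * (\<delta> \<bullet> \<delta>)" using c by simp
  ultimately show ?thesis using quad_w quad_u dist by linarith
qed

lemma potential_update_le:
  fixes D :: "real^'n^'n"
  assumes D: "pos_def D" and c: "0 < c" and y: "y = -1 \<or> y = 1"
  shows "potential (lasec_S c D x) (matrix_inv (mat 1 + (1/c) *\<^sub>R D) *v e + y *\<^sub>R x) v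
    \<le> potential D e v' + (c/2) * (norm (v - v'))\<^sup>2
      + update_cost (lasec_S c D x) x y (lasec_p c D e x) v"
proof -
  define \<theta> where "\<theta> = matrix_inv D *v e"
  have "(v - \<theta>) \<bullet> (shrink c D *v (v - \<theta>)) \<le> 2 * potential D e v' + c * (norm (v - v'))\<^sup>2"
    using shrink_quad_le[OF D c, of "v - \<theta>" "v' - \<theta>"] unfolding potential_def \<theta>_def by simp
  then show ?thesis using potential_update_le_shrink[OF D c y, of x e v] unfolding \<theta>_def by simp
qed

lemma potential_first_update_le:
  fixes x v :: "real^'n"
  assumes b: "0 < b" "b < c" and y: "y = -1 \<or> y = 1"
  defines "D\<^sub>0 \<equiv> (b * c / (c - b)) *\<^sub>R mat 1"
  shows "potential (lasec_S c D\<^sub>0 x) (y *\<^sub>R x) v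
    \<le> (b/2) * (norm v)\<^sup>2 + update_cost (lasec_S c D\<^sub>0 x) x y 0 v"
proof -
  have "pos_def D\<^sub>0" unfolding D\<^sub>0_def using b by (intro pos_def_scaleR_id) simp
  moreover have "0 < c" using b by simp
  ultimately show ?thesis
    using potential_update_le_shrink[of D\<^sub>0 c y x 0 v] y
    unfolding D\<^sub>0_def
    by (simp add: shrink_initial[OF b] lasec_p_def power2_norm_eq_inner
        flip: scaleR_matrix_vector_assoc)
qed

section \<open>The potential along a run\<close>

lemma lasec_state_Suc:
  "lasec_state b c x y z (Suc t) =
     (if z (Suc t) \<and> lasec_M b c x y z (Suc t)
      then (lasec_Smat b c x y z (Suc t),
            matrix_inv (mat 1 + (1/c) *\<^sub>R fst (lasec_state b c x y z t)) *v snd (lasec_state b c x y z t)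
              + y (Suc t) *\<^sub>R x (Suc t))
      else lasec_state b c x y z t)"
  by (cases "lasec_state b c x y z t") (simp add: lasec_M_def lasec_phat_def lasec_Smat_def Let_def)

declare lasec_state.simps(2) [simp del]

lemma pos_def_lasec_state:
  assumes "0 < b" "b < c"
  shows "pos_def (fst (lasec_state b c x y z t))"
proof (induction t)
  case 0
  have "0 < b * c / (c - b)" using assms by simp
  then show ?case by (simp add: pos_def_scaleR_id)
next
  case (Suc t)
  then show ?case
    using assms by (subst lasec_state_Suc) (auto simp: lasec_Smat_def intro: pos_def_lasec_S)
qed

lemma lasec_phat_1: "lasec_phat b c x y z 1 = 0"
  by (simp add: lasec_phat_def lasec_p_def)

text \<open>With \<open>sgn 0 = 0\<close> the first prediction is always a mistake, so a queried first
  round is always an update.\<close>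
lemma lasec_M_1: "y 1 = -1 \<or> y 1 = 1 \<Longrightarrow> lasec_M b c x y z 1"
  unfolding lasec_M_def lasec_phat_1 by auto

lemma lasec_upd_Suc:
  "lasec_upd b c x y (Suc t) z =
    lasec_upd b c x y t z \<union> (if lasec_M b c x y z (Suc t) \<and> z (Suc t) then {Suc t} else {})"
  by (auto simp: lasec_upd_def le_Suc_eq)

lemma lasec_upd_subset: "lasec_upd b c x y t z \<subseteq> {1..t}"
  by (auto simp: lasec_upd_def)

lemma lasec_upd_first:
  "y 1 = -1 \<or> y 1 = 1 \<Longrightarrow> z 1 \<Longrightarrow> 1 \<le> t \<Longrightarrow> 1 \<in> lasec_upd b c x y t z"
  using lasec_M_1[of y b c x z] by (simp add: lasec_upd_def)

lemma lasec_V_Suc_no_update: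
  assumes "\<not> (lasec_M b c x y z (Suc t) \<and> z (Suc t))"
  shows "lasec_V b c x y (Suc t) v z = lasec_V b c x y t v z"
proof -
  have "lasec_upd b c x y (Suc t) z = lasec_upd b c x y t z"
    unfolding lasec_upd_Suc using assms by auto
  then show ?thesis unfolding lasec_V_def by simp
qed

lemma lasec_V_Suc_update:
  assumes "lasec_M b c x y z (Suc t) \<and> z (Suc t)" and "lasec_upd b c x y t z \<noteq> {}"
  shows "lasec_V b c x y (Suc t) v z = lasec_V b c x y t v z
           + (norm (v (Suc t) - v (Max (lasec_upd b c x y t z))))\<^sup>2"
proof -
  define U where "U = lasec_upd b c x y t z"
  have U_Suc: "lasec_upd b c x y (Suc t) z = insert (Suc t) U"
    unfolding U_def lasec_upd_Suc using assms by auto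
  have U_sub: "U \<subseteq> {1..t}" unfolding U_def by (rule lasec_upd_subset)
  then have U: "U \<subseteq> {1..t}" "finite U" "Suc t \<notin> U" "U \<noteq> {}"
    using assms(2) unfolding U_def by (auto intro: finite_subset)
  define h where "h = (\<lambda>W r. if {s \<in> W. s < r} = {} then 0
             else (norm (v r - v (Max {s \<in> W. s < (r::nat)})))\<^sup>2)"
  have V: "lasec_V b c x y t' v z = (\<Sum>r\<in>lasec_upd b c x y t' z. h (lasec_upd b c x y t' z) r)" for t'
    unfolding lasec_V_def h_def Let_def ..
  have "{s \<in> insert (Suc t) U. s < r} = {s \<in> U. s < r}" if "r \<in> U" for r
    using that U(1) by auto
  then have "(\<Sum>r\<in>U. h (insert (Suc t) U) r) = (\<Sum>r\<in>U. h U r)"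
    unfolding h_def by (intro sum.cong) auto
  moreover have "{s \<in> insert (Suc t) U. s < Suc t} = U" using U(1) by auto
  then have "h (insert (Suc t) U) (Suc t) = (norm (v (Suc t) - v (Max U)))\<^sup>2"
    unfolding h_def using U(4) by simp
  ultimately show ?thesis
    unfolding V U_Suc U_def[symmetric] sum.insert[OF U(2,3)] by simp
qed

lemma lasec_potential_1_le:
  fixes x :: "nat \<Rightarrow> real^'d" and v :: "real^'d"
  assumes b: "0 < b" "b < c" and y1: "y 1 = -1 \<or> y 1 = 1" and z1: "z 1"
  shows "potential (fst (lasec_state b c x y z 1)) (snd (lasec_state b c x y z 1)) v
    \<le> (b/2) * (norm v)\<^sup>2
      + update_cost (lasec_Smat b c x y z 1) (x 1) (y 1) (lasec_phat b c x y z 1) v"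
proof -
  define D\<^sub>0 :: "real^'d^'d" where "D\<^sub>0 = (b * c / (c - b)) *\<^sub>R mat 1"
  have st0: "lasec_state b c x y z 0 = (D\<^sub>0, 0)" by (simp add: D\<^sub>0_def)
  have "lasec_state b c x y z 1 = (lasec_S c D\<^sub>0 (x 1), y 1 *\<^sub>R x 1)"
    using lasec_state_Suc[of b c x y z 0] lasec_M_1[of y b c x z, OF y1] z1 st0
    by (simp del: lasec_state.simps add: lasec_Smat_def)
  moreover have "lasec_Smat b c x y z 1 = lasec_S c D\<^sub>0 (x 1)"
    unfolding lasec_Smat_def by (simp del: lasec_state.simps add: st0)
  ultimately show ?thesis
    using potential_first_update_le[OF b y1, of "x 1" v]
    unfolding lasec_phat_1 D\<^sub>0_def[symmetric] by simp
qed

lemma lasec_potential_Suc_le: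
  fixes x :: "nat \<Rightarrow> real^'d" and v v' :: "real^'d"
  assumes b: "0 < b" "b < c" and y: "y (Suc t) = -1 \<or> y (Suc t) = 1"
    and upd: "lasec_M b c x y z (Suc t) \<and> z (Suc t)"
  shows "potential (fst (lasec_state b c x y z (Suc t))) (snd (lasec_state b c x y z (Suc t))) v
    \<le> potential (fst (lasec_state b c x y z t)) (snd (lasec_state b c x y z t)) v'
      + (c/2) * (norm (v - v'))\<^sup>2
      + update_cost (lasec_Smat b c x y z (Suc t)) (x (Suc t)) (y (Suc t)) (lasec_phat b c x y z (Suc t)) v"
proof -
  obtain D e where De: "lasec_state b c x y z t = (D, e)" by fastforce
  have "pos_def D" using pos_def_lasec_state[OF b, of x y z t] De by simp
  moreover have "0 < c" using b by simp
  moreover have "lasec_state b c x y z (Suc t) = (lasec_S c D (x (Suc t)),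
      matrix_inv (mat 1 + (1/c) *\<^sub>R D) *v e + y (Suc t) *\<^sub>R x (Suc t))"
    using upd De by (simp add: lasec_state_Suc lasec_Smat_def)
  ultimately show ?thesis
    using potential_update_le[OF _ _ y] De by (simp add: lasec_phat_def lasec_Smat_def)
qed

lemma lasec_potential_bound:
  fixes x v :: "nat \<Rightarrow> real^'d"
  assumes b: "0 < b" "b < c" and y: "\<forall>t\<in>{1..T}. y t = -1 \<or> y t = 1" and z1: "z 1"
  defines "cost \<equiv> \<lambda>r. update_cost (lasec_Smat b c x y z r) (x r) (y r) (lasec_phat b c x y z r) (v r)"
  shows "1 \<le> t \<Longrightarrow> t \<le> T \<Longrightarrow>
     potential (fst (lasec_state b c x y z t)) (snd (lasec_state b c x y z t))
       (v (Max (lasec_upd b c x y t z)))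
     \<le> (b/2) * (norm (v 1))\<^sup>2 + (\<Sum>r\<in>lasec_upd b c x y t z. cost r) + (c/2) * lasec_V b c x y t v z"
proof (induction t rule: nat_induct_at_least)
  case base
  have y1: "y 1 = -1 \<or> y 1 = 1" using y base by auto
  have U1: "lasec_upd b c x y 1 z = {1}"
    using lasec_M_1[of y b c x z, OF y1] z1 by (auto simp: lasec_upd_def)
  have "lasec_V b c x y 1 v z = 0" unfolding lasec_V_def U1 by simp
  then show ?case using lasec_potential_1_le[where y = y and z = z and x = x and v = "v 1", OF b y1 z1] unfolding U1 cost_def by simp
next
  case (Suc t)
  define U where "U = lasec_upd b c x y t z"
  have IH: "potential (fst (lasec_state b c x y z t)) (snd (lasec_state b c x y z t)) (v (Max U))
      \<le> (b/2) * (norm (v 1))\<^sup>2 + (\<Sum>r\<in>U. cost r) + (c/2) * lasec_V b c x y t v z"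
    using Suc unfolding U_def by simp
  have U_sub: "U \<subseteq> {1..t}" unfolding U_def by (rule lasec_upd_subset)
  have "y 1 = -1 \<or> y 1 = 1" using y Suc(1,3) by auto
  then have "1 \<in> U" unfolding U_def using z1 Suc(1) by (rule lasec_upd_first)
  with U_sub have U: "finite U" "Suc t \<notin> U" "U \<noteq> {}" by (auto intro: finite_subset)
  show ?case
  proof (cases "lasec_M b c x y z (Suc t) \<and> z (Suc t)")
    case False
    then have "lasec_state b c x y z (Suc t) = lasec_state b c x y z t"
      "lasec_upd b c x y (Suc t) z = U"
      unfolding U_def by (auto simp: lasec_state_Suc lasec_upd_Suc)
    then show ?thesis using IH lasec_V_Suc_no_update[OF False] unfolding U_def by simp
  next
    case True
    have "y (Suc t) = -1 \<or> y (Suc t) = 1" using y Suc by auto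
    note step = lasec_potential_Suc_le[OF b this True, of "v (Suc t)" "v (Max U)"]
    have "lasec_upd b c x y (Suc t) z = insert (Suc t) U"
      unfolding U_def lasec_upd_Suc using True by auto
    moreover have "Max (insert (Suc t) U) = Suc t" using U(1) U_sub by (intro Max_eqI) auto
    moreover have "lasec_V b c x y (Suc t) v z = lasec_V b c x y t v z + (norm (v (Suc t) - v (Max U)))\<^sup>2"
      using lasec_V_Suc_update[OF True] U unfolding U_def by auto
    ultimately show ?thesis
      using step IH unfolding cost_def by (simp add: sum.insert[OF U(1,2)] algebra_simps)
  qed
qed

section \<open>Predictable coins\<close>

definition determined_by :: "nat set \<Rightarrow> ((nat \<Rightarrow> bool) \<Rightarrow> 'a) \<Rightarrow> bool" where
  "determined_by S F \<longleftrightarrow> (\<forall>z z'. (\<forall>s\<in>S. z s = z' s) \<longrightarrow> F z = F z')"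

definition predictable :: "(nat \<Rightarrow> (nat \<Rightarrow> bool) \<Rightarrow> 'a) \<Rightarrow> bool" where
  "predictable q \<longleftrightarrow> (\<forall>t. determined_by {1..<t} (q t))"

text \<open>For predictable \<open>q\<close>, \<open>coin_prob q T\<close> is the law of coins \<open>Z\<^sub>1, \<dots>, Z\<^sub>T\<close> where \<open>Z\<^sub>t\<close> comes
  up with probability \<open>q t\<close> given \<open>Z\<^sub>1, \<dots>, Z\<^sub>t\<^sub>-\<^sub>1\<close>.\<close>
definition coin_prob :: "(nat \<Rightarrow> (nat \<Rightarrow> bool) \<Rightarrow> real) \<Rightarrow> nat \<Rightarrow> (nat \<Rightarrow> bool) \<Rightarrow> real" where
  "coin_prob q T z = (\<Prod>t\<in>{1..T}. if z t then q t z else 1 - q t z)"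

definition coin_expect :: "(nat \<Rightarrow> (nat \<Rightarrow> bool) \<Rightarrow> real) \<Rightarrow> nat \<Rightarrow> ((nat \<Rightarrow> bool) \<Rightarrow> real) \<Rightarrow> real" where
  "coin_expect q T F = (\<Sum>z\<in>PiE {1..T} (\<lambda>_. UNIV). coin_prob q T z * F z)"

lemma determined_byD: "determined_by S F \<Longrightarrow> (\<And>s. s \<in> S \<Longrightarrow> z s = z' s) \<Longrightarrow> F z = F z'"
  unfolding determined_by_def by blast

lemma determined_by_mono: "determined_by S F \<Longrightarrow> S \<subseteq> S' \<Longrightarrow> determined_by S' F"
  unfolding determined_by_def by blast

lemma determined_by_comp: "determined_by S F \<Longrightarrow> determined_by S (\<lambda>z. g (F z))"
  unfolding determined_by_def by metis

lemma determined_by_comp2: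
  "determined_by S F \<Longrightarrow> determined_by S G \<Longrightarrow> determined_by S (\<lambda>z. h (F z) (G z))"
  unfolding determined_by_def by metis

lemma determined_by_upd: "determined_by S F \<Longrightarrow> t \<notin> S \<Longrightarrow> F (z(t := \<beta>)) = F z"
  by (rule determined_byD) auto

lemma coin_prob_upd_Suc:
  assumes "predictable q"
  shows "coin_prob q (Suc T) (z(Suc T := \<beta>)) =
    coin_prob q T z * (if \<beta> then q (Suc T) z else 1 - q (Suc T) z)"
proof -
  have q: "q t (z(Suc T := \<beta>)) = q t z" if "t \<le> Suc T" for t
    using assms that unfolding predictable_def by (intro determined_by_upd) auto
  have "coin_prob q T (z(Suc T := \<beta>)) = coin_prob q T z"
    unfolding coin_prob_def by (rule prod.cong) (auto simp: q)
  moreover have "coin_prob q (Suc T) (z(Suc T := \<beta>)) = coin_prob q T (z(Suc T := \<beta>))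
      * (if \<beta> then q (Suc T) (z(Suc T := \<beta>)) else 1 - q (Suc T) (z(Suc T := \<beta>)))"
    by (simp add: coin_prob_def)
  ultimately show ?thesis unfolding q[of "Suc T", OF order.refl] by simp
qed

lemma coin_expect_Suc:
  assumes "predictable q"
  shows "coin_expect q (Suc T) F =
    coin_expect q T (\<lambda>z. q (Suc T) z * F (z(Suc T := True)) + (1 - q (Suc T) z) * F (z(Suc T := False)))"
proof -
  let ?P = "PiE {1..T} (\<lambda>_. UNIV :: bool set)"
  let ?upd = "\<lambda>(\<beta>, z). z(Suc T := \<beta>)"
  have "PiE {1..Suc T} (\<lambda>_. UNIV :: bool set) = ?upd ` (UNIV \<times> ?P)"
    by (simp add: atLeastAtMostSuc_conv PiE_insert_eq)
  moreover have "inj_on ?upd (UNIV \<times> ?P)"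
    using inj_combinator[of "Suc T" "{1..T}" "\<lambda>_. UNIV :: bool set"] by simp
  ultimately have "coin_expect q (Suc T) F =
      (\<Sum>(\<beta>, z)\<in>UNIV \<times> ?P. coin_prob q (Suc T) (z(Suc T := \<beta>)) * F (z(Suc T := \<beta>)))"
    unfolding coin_expect_def by (simp add: sum.reindex case_prod_unfold)
  also have "\<dots> = (\<Sum>z\<in>?P. \<Sum>\<beta>\<in>UNIV. coin_prob q (Suc T) (z(Suc T := \<beta>)) * F (z(Suc T := \<beta>)))"
    by (subst sum.cartesian_product[symmetric]) (rule sum.swap)
  also have "\<dots> = coin_expect q T
      (\<lambda>z. q (Suc T) z * F (z(Suc T := True)) + (1 - q (Suc T) z) * F (z(Suc T := False)))"
    unfolding coin_expect_def coin_prob_upd_Suc[OF assms] UNIV_bool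
    by (intro sum.cong) (simp_all add: algebra_simps)
  finally show ?thesis .
qed

lemma coin_expect_0: "coin_expect q 0 F = F (\<lambda>_. undefined)"
  unfolding coin_expect_def coin_prob_def by simp

lemma coin_expect_determined:
  assumes q: "predictable q" and F: "determined_by {1..t} F"
  shows "t \<le> T \<Longrightarrow> coin_expect q T F = coin_expect q t F"
proof (induction T rule: dec_induct)
  case (step n)
  have "F (z(Suc n := \<beta>)) = F z" for z \<beta>
    using F step(1) by (intro determined_by_upd) auto
  then show ?case using step(3) by (simp add: coin_expect_Suc[OF q] algebra_simps)
qed simp

lemma coin_expect_const: "predictable q \<Longrightarrow> coin_expect q T (\<lambda>_. k) = k"
  using coin_expect_determined[of q 0 "\<lambda>_. k" T] by (simp add: determined_by_def coin_expect_0)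

lemma coin_expect_add: "coin_expect q T (\<lambda>z. F z + G z) = coin_expect q T F + coin_expect q T G"
  by (simp add: coin_expect_def distrib_left sum.distrib)

lemma coin_expect_cmult: "coin_expect q T (\<lambda>z. k * F z) = k * coin_expect q T F"
  by (simp add: coin_expect_def sum_distrib_left mult_ac)

lemma coin_expect_sum: "coin_expect q T (\<lambda>z. \<Sum>t\<in>A. f t z) = (\<Sum>t\<in>A. coin_expect q T (f t))"
  unfolding coin_expect_def by (simp add: sum_distrib_left) (rule sum.swap)

lemma coin_expect_mono:
  assumes "\<And>t z. 0 \<le> q t z \<and> q t z \<le> 1" and "\<And>z. coin_prob q T z \<noteq> 0 \<Longrightarrow> F z \<le> G z"
  shows "coin_expect q T F \<le> coin_expect q T G"
  unfolding coin_expect_def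
proof (rule sum_mono)
  fix z
  have "0 \<le> coin_prob q T z" unfolding coin_prob_def using assms(1) by (intro prod_nonneg) simp
  then show "coin_prob q T z * F z \<le> coin_prob q T z * G z"
    using assms(2)[of z] by (cases "coin_prob q T z = 0") (simp_all add: mult_left_mono)
qed

text \<open>The tower property, for the coin \<open>Z\<^sub>t\<close> against a factor fixed by \<open>Z\<^sub>1, \<dots>, Z\<^sub>t\<^sub>-\<^sub>1\<close>.\<close>
lemma coin_expect_indicator:
  assumes q: "predictable q" and t: "1 \<le> t" "t \<le> T" and H: "determined_by {1..<t} H"
  shows "coin_expect q T (\<lambda>z. H z * of_bool (z t)) = coin_expect q T (\<lambda>z. H z * q t z)"
proof -
  have H': "determined_by {1..t} H" using H by (rule determined_by_mono) auto
  have "determined_by {1..<t} (q t)" using q unfolding predictable_def by simp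
  then have q': "determined_by {1..t} (q t)" by (rule determined_by_mono) auto
  have z: "determined_by {1..t} (\<lambda>z. z t)" using t by (simp add: determined_by_def)
  have reduce: "coin_expect q T (\<lambda>z. H z * of_bool (z t)) = coin_expect q t (\<lambda>z. H z * of_bool (z t))"
    "coin_expect q T (\<lambda>z. H z * q t z) = coin_expect q t (\<lambda>z. H z * q t z)"
    using coin_expect_determined[OF q _ t(2)]
      determined_by_comp2[OF H' z, of "\<lambda>h b. h * of_bool b"] determined_by_comp2[OF H' q', of "(*)"]
    by simp_all
  obtain s where s: "t = Suc s" using t by (cases t) auto
  have "H (z(Suc s := \<beta>)) = H z" "q (Suc s) (z(Suc s := \<beta>)) = q (Suc s) z" for z \<beta>
    using H q unfolding predictable_def s by (auto intro: determined_by_upd)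
  then have "coin_expect q (Suc s) (\<lambda>z. H z * of_bool (z (Suc s)))
      = coin_expect q (Suc s) (\<lambda>z. H z * q (Suc s) z)"
    by (simp add: coin_expect_Suc[OF q] algebra_simps)
  then show ?thesis using reduce s by simp
qed

section \<open>The query coins of LASEC-SS\<close>

definition lasec_query_prob :: "real \<Rightarrow> real \<Rightarrow> real \<Rightarrow> (nat \<Rightarrow> real^'d) \<Rightarrow> (nat \<Rightarrow> real)
    \<Rightarrow> nat \<Rightarrow> (nat \<Rightarrow> bool) \<Rightarrow> real" where
  "lasec_query_prob a b c x y t z = a / (a + \<bar>lasec_phat b c x y z t\<bar>)"

lemma lasec_E_eq_coin_expect:
  "lasec_E a b c x y T F = coin_expect (lasec_query_prob a b c x y) T F"
  unfolding lasec_E_def lasec_prob_def coin_expect_def coin_prob_def lasec_query_prob_def Let_def ..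

lemma lasec_state_determined: "determined_by {1..t} (\<lambda>z. lasec_state b c x y z t)"
proof (induction t)
  case (Suc t)
  show ?case
  proof (unfold determined_by_def, intro allI impI)
    fix z z' :: "nat \<Rightarrow> bool"
    assume agree: "\<forall>s\<in>{1..Suc t}. z s = z' s"
    then have "lasec_state b c x y z t = lasec_state b c x y z' t"
      by (intro determined_byD[OF Suc.IH]) auto
    moreover have "z (Suc t) = z' (Suc t)" using agree by simp
    ultimately show "lasec_state b c x y z (Suc t) = lasec_state b c x y z' (Suc t)"
      by (simp add: lasec_state.simps(2) Let_def split: prod.split)
  qed
qed (simp add: determined_by_def)

lemma lasec_phat_determined: "determined_by {1..<t} (\<lambda>z. lasec_phat b c x y z t)"
proof -
  have "{1..t - 1} = {1..<t}" by auto
  then show ?thesis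
    using determined_by_comp[OF lasec_state_determined[of "t - 1" b c x y],
        of "\<lambda>(D, e). lasec_p c D e (x t)"]
    unfolding lasec_phat_def by simp
qed

lemma lasec_M_determined: "determined_by {1..<t} (\<lambda>z. lasec_M b c x y z t)"
  unfolding lasec_M_def by (rule determined_by_comp[OF lasec_phat_determined])

lemma predictable_lasec_query_prob: "predictable (lasec_query_prob a b c x y)"
  unfolding predictable_def lasec_query_prob_def
  by (intro allI determined_by_comp[OF lasec_phat_determined])

lemma lasec_query_prob_bounds: "0 < a \<Longrightarrow> 0 \<le> lasec_query_prob a b c x y t z \<and> lasec_query_prob a b c x y t z \<le> 1"
  unfolding lasec_query_prob_def by simp

lemma lasec_coin_prob_nonzero:
  assumes "0 < a" "coin_prob (lasec_query_prob a b c x y) T z \<noteq> 0"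
  shows "T = 0 \<or> z 1"
proof (rule ccontr)
  assume "\<not> (T = 0 \<or> z 1)"
  moreover have "lasec_query_prob a b c x y 1 z = 1"
    using assms(1) by (simp add: lasec_query_prob_def lasec_phat_def lasec_p_def)
  ultimately have "coin_prob (lasec_query_prob a b c x y) T z = 0"
    unfolding coin_prob_def by (intro prod_zero bexI[of _ 1]) auto
  with assms(2) show False ..
qed

section \<open>The mistake bound\<close>

lemma lasec_V_scaleR: "lasec_V b c x y T (\<lambda>t. k *\<^sub>R u t) z = k\<^sup>2 * lasec_V b c x y T u z"
proof -
  have "(norm (k *\<^sub>R p - k *\<^sub>R q))\<^sup>2 = k\<^sup>2 * (norm (p - q))\<^sup>2" for p q :: "real^'a"
    by (simp add: scaleR_diff_right[symmetric] power_mult_distrib)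
  then show ?thesis
    unfolding lasec_V_def Let_def sum_distrib_left
    by (intro sum.cong refl) (simp only: if_distrib[of "(*) (k\<^sup>2)"] mult_zero_right)
qed

lemma sum_of_bool_lasec_upd:
  "(\<Sum>t=1..T. of_bool (lasec_M b c x y z t \<and> z t) * h t) = (\<Sum>t\<in>lasec_upd b c x y T z. (h t :: real))"
proof -
  have "(\<Sum>t=1..T. of_bool (lasec_M b c x y z t \<and> z t) * h t)
      = (\<Sum>t=1..T. if lasec_M b c x y z t \<and> z t then h t else 0)"
    by (intro sum.cong) auto
  also have "\<dots> = (\<Sum>t\<in>{t\<in>{1..T}. lasec_M b c x y z t \<and> z t}. h t)"
    by (rule sum.inter_filter[symmetric]) simp
  finally show ?thesis unfolding lasec_upd_def .
qed

lemma label_mult_mistake: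
  fixes y p :: real
  assumes "y = -1 \<or> y = 1" and "sgn p \<noteq> y"
  shows "y * p = - \<bar>p\<bar>"
  using assms by (cases "p > 0"; cases "p < 0") (auto simp: sgn_if)

text \<open>On a mistake round, scaling the comparator by \<open>a/\<gamma>\<close> trades the linear term of the
  update cost for the hinge loss, and the margin term \<open>y p = -\<bar>p\<bar>\<close> pays for \<open>a + \<bar>p\<bar>\<close>.\<close>
lemma update_cost_scaleR_le:
  assumes y: "y = -1 \<or> y = 1" and mistake: "sgn p \<noteq> y" and a: "0 < a" and \<gamma>: "0 < \<gamma>"
  shows "update_cost S x y p ((a/\<gamma>) *\<^sub>R u)
    \<le> (a/\<gamma>) * hinge \<gamma> y u x + (a/\<gamma>)\<^sup>2 / 2 * (u \<bullet> x)\<^sup>2 + (1/2) * (x \<bullet> (matrix_inv S *v x))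
      - (a + \<bar>p\<bar>)"
proof -
  define k where "k = a / \<gamma>"
  define w where "w = u \<bullet> x"
  have k: "0 \<le> k" "k * \<gamma> = a" unfolding k_def using a \<gamma> by simp_all
  have "k * (\<gamma> - y * w) \<le> k * hinge \<gamma> y u x"
    using k(1) unfolding hinge_def w_def by (intro mult_left_mono) simp_all
  then have "a - k * (y * w) \<le> k * hinge \<gamma> y u x" using k(2) by (simp add: right_diff_distrib)
  moreover have "update_cost S x y p (k *\<^sub>R u)
      = k\<^sup>2 / 2 * w\<^sup>2 - k * (y * w) + y * p + (1/2) * (x \<bullet> (matrix_inv S *v x))"
    unfolding update_cost_def w_def by (simp add: power_mult_distrib)
  ultimately show ?thesis
    using label_mult_mistake[OF y mistake] unfolding k_def[symmetric] w_def[symmetric] by linarith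
qed

lemma lasec_sum_updates_le:
  fixes x u :: "nat \<Rightarrow> real^'d"
  assumes b: "0 < b" "b < c" and a: "0 < a" and \<gamma>: "0 < \<gamma>"
    and y: "\<forall>t\<in>{1..T}. y t = -1 \<or> y t = 1" and T: "1 \<le> T" and z1: "z 1"
  defines "U \<equiv> lasec_upd b c x y T z"
  shows "(\<Sum>r\<in>U. a + \<bar>lasec_phat b c x y z r\<bar>)
    \<le> (a/\<gamma>) * (\<Sum>r\<in>U. hinge \<gamma> (y r) (u r) (x r))
      + (a/\<gamma>)\<^sup>2 / 2 * (b * (norm (u 1))\<^sup>2 + c * lasec_V b c x y T u z + (\<Sum>r\<in>U. (u r \<bullet> x r)\<^sup>2))
      + (1/2) * (\<Sum>r\<in>U. x r \<bullet> (matrix_inv (lasec_Smat b c x y z r) *v x r))"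
proof -
  define k where "k = a / \<gamma>"
  define p where "p r = lasec_phat b c x y z r" for r
  define xSx where "xSx r = x r \<bullet> (matrix_inv (lasec_Smat b c x y z r) *v x r)" for r
  have U: "finite U" "U \<subseteq> {1..T}" unfolding U_def lasec_upd_def by auto
  have "0 \<le> potential (fst (lasec_state b c x y z T)) (snd (lasec_state b c x y z T))
      (k *\<^sub>R u (Max U))"
    using b by (intro potential_nonneg pos_def_lasec_state)
  also have "\<dots> \<le> (b/2) * (norm (k *\<^sub>R u 1))\<^sup>2
      + (\<Sum>r\<in>U. update_cost (lasec_Smat b c x y z r) (x r) (y r) (p r) (k *\<^sub>R u r))
      + (c/2) * lasec_V b c x y T (\<lambda>t. k *\<^sub>R u t) z"
    using lasec_potential_bound[where y = y and z = z and v = "\<lambda>t. k *\<^sub>R u t" and t = T,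
        OF b y z1] T
    unfolding U_def p_def by simp
  also have "(\<Sum>r\<in>U. update_cost (lasec_Smat b c x y z r) (x r) (y r) (p r) (k *\<^sub>R u r))
      \<le> (\<Sum>r\<in>U. k * hinge \<gamma> (y r) (u r) (x r) + k\<^sup>2 / 2 * (u r \<bullet> x r)\<^sup>2 + (1/2) * xSx r
            - (a + \<bar>p r\<bar>))"
  proof (rule sum_mono)
    fix r assume "r \<in> U"
    then have "y r = -1 \<or> y r = 1" "sgn (p r) \<noteq> y r"
      using y U(2) unfolding U_def lasec_upd_def lasec_M_def p_def by auto
    then show "update_cost (lasec_Smat b c x y z r) (x r) (y r) (p r) (k *\<^sub>R u r)
        \<le> k * hinge \<gamma> (y r) (u r) (x r) + k\<^sup>2 / 2 * (u r \<bullet> x r)\<^sup>2 + (1/2) * xSx r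
          - (a + \<bar>p r\<bar>)"
      unfolding k_def xSx_def using a \<gamma> by (rule update_cost_scaleR_le)
  qed
  finally show ?thesis
    unfolding k_def[symmetric] p_def[symmetric] xSx_def[symmetric]
    by (simp add: lasec_V_scaleR sum.distrib sum_subtractf sum_distrib_left sum_divide_distrib
        power_mult_distrib algebra_simps)
qed

lemma lasec_mistake_bound_pointwise:
  fixes x u :: "nat \<Rightarrow> real^'d"
  assumes b: "0 < b" "b < c" and a: "0 < a" and \<gamma>: "0 < \<gamma>"
    and y: "\<forall>t\<in>{1..T}. y t = -1 \<or> y t = 1" and z: "T = 0 \<or> z 1"
  shows "(\<Sum>t=1..T. of_bool (lasec_M b c x y z t \<and> z t) * ((a + \<bar>lasec_phat b c x y z t\<bar>) / a))
    \<le> (1/\<gamma>) * (\<Sum>t=1..T. of_bool (lasec_M b c x y z t \<and> z t) * hinge \<gamma> (y t) (u t) (x t))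
      + a / (2 * \<gamma>\<^sup>2) * (b * (norm (u 1))\<^sup>2 + c * lasec_V b c x y T u z
          + (\<Sum>t=1..T. of_bool (lasec_M b c x y z t \<and> z t) * (u t \<bullet> x t)\<^sup>2))
      + 1 / (2 * a) * (\<Sum>t=1..T. of_bool (lasec_M b c x y z t \<and> z t)
                      * (x t \<bullet> (matrix_inv (lasec_Smat b c x y z t) *v x t)))"
proof (cases "T = 0")
  case True
  then have "lasec_V b c x y T u z = 0" by (simp add: lasec_V_def lasec_upd_def)
  with True a \<gamma> b show ?thesis by simp
next
  case False
  with z have "1 \<le> T" "z 1" by auto
  from lasec_sum_updates_le[where x = x and y = y and z = z and u = u, OF b a \<gamma> y this] a
  have "(\<Sum>r\<in>lasec_upd b c x y T z. a + \<bar>lasec_phat b c x y z r\<bar>) / a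
    \<le> ((a/\<gamma>) * (\<Sum>r\<in>lasec_upd b c x y T z. hinge \<gamma> (y r) (u r) (x r))
      + (a/\<gamma>)\<^sup>2 / 2 * (b * (norm (u 1))\<^sup>2 + c * lasec_V b c x y T u z
        + (\<Sum>r\<in>lasec_upd b c x y T z. (u r \<bullet> x r)\<^sup>2))
      + (1/2) * (\<Sum>r\<in>lasec_upd b c x y T z. x r \<bullet> (matrix_inv (lasec_Smat b c x y z r) *v x r))) / a"
    by (rule divide_right_mono[OF _ less_imp_le])
  then show ?thesis
    unfolding sum_of_bool_lasec_upd
    using a \<gamma> by (simp add: sum_divide_distrib[symmetric] field_simps power2_eq_square)
qed

lemma lasec_expected_queries:
  "coin_expect (lasec_query_prob a b c x y) T (\<lambda>z. \<Sum>t=1..T. of_bool (z t))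
    = (\<Sum>t=1..T. coin_expect (lasec_query_prob a b c x y) T (\<lambda>z. a / (a + \<bar>lasec_phat b c x y z t\<bar>)))"
proof -
  have "coin_expect (lasec_query_prob a b c x y) T (\<lambda>z. 1 * of_bool (z t))
      = coin_expect (lasec_query_prob a b c x y) T (\<lambda>z. 1 * lasec_query_prob a b c x y t z)"
    if "t \<in> {1..T}" for t
    using that by (intro coin_expect_indicator predictable_lasec_query_prob) (auto simp: determined_by_def)
  then show ?thesis
    unfolding coin_expect_sum by (intro sum.cong) (simp_all add: lasec_query_prob_def)
qed

text \<open>Dividing each mistake indicator by its query probability turns mistakes into
  queried mistakes without changing the expectation.\<close>
lemma lasec_expected_mistakes:
  assumes a: "0 < a"
  shows "coin_expect (lasec_query_prob a b c x y) T (\<lambda>z. \<Sum>t=1..T. of_bool (lasec_M b c x y z t))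
    = coin_expect (lasec_query_prob a b c x y) T
        (\<lambda>z. \<Sum>t=1..T. of_bool (lasec_M b c x y z t \<and> z t) * ((a + \<bar>lasec_phat b c x y z t\<bar>) / a))"
proof -
  let ?q = "lasec_query_prob a b c x y"
  define H where "H t z = of_bool (lasec_M b c x y z t) * ((a + \<bar>lasec_phat b c x y z t\<bar>) / a)" for t z
  have "coin_expect ?q T (\<lambda>z. of_bool (lasec_M b c x y z t))
      = coin_expect ?q T (\<lambda>z. H t z * of_bool (z t))" if "t \<in> {1..T}" for t
  proof -
    have "H t z * ?q t z = of_bool (lasec_M b c x y z t)" for z
      using a unfolding H_def lasec_query_prob_def by (simp add: add_pos_nonneg)
    then have "coin_expect ?q T (\<lambda>z. of_bool (lasec_M b c x y z t))
        = coin_expect ?q T (\<lambda>z. H t z * ?q t z)" by simp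
    also have "\<dots> = coin_expect ?q T (\<lambda>z. H t z * of_bool (z t))"
      unfolding H_def using that
      by (intro coin_expect_indicator[symmetric] predictable_lasec_query_prob
          determined_by_comp2[where h = "\<lambda>m p. of_bool m * ((a + \<bar>p\<bar>) / a)",
            OF lasec_M_determined lasec_phat_determined]) auto
    finally show ?thesis .
  qed
  then show ?thesis
    unfolding coin_expect_sum by (intro sum.cong) (simp_all add: H_def of_bool_conj mult_ac)
qed

lemma lasec_expected_mistakes_le:
  fixes x u :: "nat \<Rightarrow> real^'d"
  assumes "0 < b" "b < c" "0 < a" "0 < \<gamma>" "\<forall>t\<in>{1..T}. y t = -1 \<or> y t = 1"
  shows "coin_expect (lasec_query_prob a b c x y) T (\<lambda>z. \<Sum>t=1..T. of_bool (lasec_M b c x y z t))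
    \<le> coin_expect (lasec_query_prob a b c x y) T (\<lambda>z.
        (1/\<gamma>) * (\<Sum>t=1..T. of_bool (lasec_M b c x y z t \<and> z t) * hinge \<gamma> (y t) (u t) (x t))
        + a / (2 * \<gamma>\<^sup>2) * (b * (norm (u 1))\<^sup>2 + c * lasec_V b c x y T u z
            + (\<Sum>t=1..T. of_bool (lasec_M b c x y z t \<and> z t) * (u t \<bullet> x t)\<^sup>2))
        + 1 / (2 * a) * (\<Sum>t=1..T. of_bool (lasec_M b c x y z t \<and> z t)
                      * (x t \<bullet> (matrix_inv (lasec_Smat b c x y z t) *v x t))))"
  unfolding lasec_expected_mistakes[OF assms(3)]
  by (rule coin_expect_mono[OF lasec_query_prob_bounds[OF assms(3)]],
      rule lasec_mistake_bound_pointwise[OF assms], rule lasec_coin_prob_nonzero[OF assms(3)])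

theorem theorem4:
  fixes a b c \<gamma> :: real and T :: nat
    and x u :: "nat \<Rightarrow> real^'d" and y :: "nat \<Rightarrow> real"
  assumes "0 < b" and "b < c" and "0 < a" and "0 < \<gamma>"
    and "\<forall>t\<in>{1..T}. y t = -1 \<or> y t = 1"
  shows "(lasec_E a b c x y T (\<lambda>z. \<Sum>t=1..T. of_bool (lasec_M b c x y z t))
         \<le> (1/\<gamma>) * lasec_E a b c x y T
               (\<lambda>z. \<Sum>t=1..T. of_bool (lasec_M b c x y z t \<and> z t) * hinge \<gamma> (y t) (u t) (x t))
           + a / (2 * \<gamma>\<^sup>2) *
               (b * (norm (u 1))\<^sup>2
                + c * lasec_E a b c x y T (lasec_V b c x y T u)
                + lasec_E a b c x y T
                    (\<lambda>z. \<Sum>t=1..T. of_bool (lasec_M b c x y z t \<and> z t) * (u t \<bullet> x t)\<^sup>2))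
           + 1 / (2 * a) * lasec_E a b c x y T
               (\<lambda>z. \<Sum>t=1..T. of_bool (lasec_M b c x y z t \<and> z t)
                      * (x t \<bullet> (matrix_inv (lasec_Smat b c x y z t) *v x t))))
         \<and> (lasec_E a b c x y T (\<lambda>z. \<Sum>t=1..T. of_bool (z t))
         = (\<Sum>t=1..T. lasec_E a b c x y T (\<lambda>z. a / (a + \<bar>lasec_phat b c x y z t\<bar>))))"
  unfolding lasec_E_eq_coin_expect
  using lasec_expected_mistakes_le[OF assms, where u = u] lasec_expected_queries[of a b c x y T]
  by (simp only: coin_expect_add coin_expect_cmult coin_expect_const[OF predictable_lasec_query_prob])

end
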